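(* Let $\alpha>0$, $\beta\in\mathbb{R}$ with $0\le|\beta|<\alpha$, $\mu\in\mathbb{R}$, $\delta>0$, and set $\gamma=\sqrt{\alpha^2-\beta^2}$. Let $F(x;\alpha,\beta,\mu,\delta)$ denote the cumulative distribution function of the normal inverse Gaussian distribution with these parameters. Then for every $x\in\mathbb{R}$ with $x-\mu>0$, \[ F(x;\alpha,\beta,\mu,\delta)=1-\frac{e^{\delta\gamma}}{\pi}\int_0^{\infty}\frac{t\,e^{-(x-\mu)\left(\sqrt{t^2+\alpha^2}-\beta\right)}}{\sqrt{t^2+\alpha^2}\left(\sqrt{t^2+\alpha^2}-\beta\right)}\sin(\delta t)\,dt . \]
   Context: The normal inverse Gaussian (NIG) distribution with parameters $\alpha>0$, $0\le|\beta|<\alpha$, $\mu\in\mathbb{R}$, $\delta>0$ has density $f(x;\alpha,\beta,\mu,\delta)=\frac{\alpha\delta}{\pi}\frac{K_1\left(\alpha\sqrt{\delta^2+(x-\mu)^2}\right)}{\sqrt{\delta^2+(x-\mu)^2}}e^{\delta\gamma+\beta(x-\mu)}$, $x\in\mathbb{R}$, where $\gamma=\sqrt{\alpha^2-\beta^2}$, and its cumulative distribution function is $F(x;\alpha,\beta,\mu,\delta)=\int_{-\infty}^x f(t;\alpha,\beta,\mu,\delta)\,dt$. Here $K_1$ denotes the modified Bessel function of the second kind of order $1$. *)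

theory Defs
  imports "HOL-Analysis.Analysis"
begin

text \<open>Modified Bessel function of the second kind of order 1, for real argument z > 0,
  via the standard integral representation
  K_nu(z) = int_0^infty exp(-z cosh s) cosh(nu s) ds (here nu = 1).\<close>
definition besselK1 :: "real \<Rightarrow> real" where
  "besselK1 z = (LINT s:{0..}|lborel. exp (- z * cosh s) * cosh s)"

definition nig_density :: "real \<Rightarrow> real \<Rightarrow> real \<Rightarrow> real \<Rightarrow> real \<Rightarrow> real" where
  "nig_density \<alpha> \<beta> \<mu> \<delta> x =
     (let \<gamma> = sqrt (\<alpha>\<^sup>2 - \<beta>\<^sup>2); r = sqrt (\<delta>\<^sup>2 + (x - \<mu>)\<^sup>2) in
      \<alpha> * \<delta> / pi * besselK1 (\<alpha> * r) / r * exp (\<delta> * \<gamma> + \<beta> * (x - \<mu>)))"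

definition nig_cdf :: "real \<Rightarrow> real \<Rightarrow> real \<Rightarrow> real \<Rightarrow> real \<Rightarrow> real" where
  "nig_cdf \<alpha> \<beta> \<mu> \<delta> x = (LINT t:{..x}|lborel. nig_density \<alpha> \<beta> \<mu> \<delta> t)"

end

theory Submission
  imports Defs "HOL-Probability.Probability" "HOL-Real_Asymp.Real_Asymp"
begin

(*
  Write w = exp v. The generalised inverse Gaussian kernel exp (- (a / w + b * w)) has explicit
  half-integer moments in w, which come from the Gaussian integral through the substitution
  x = sqrt b * exp (v/2) - sqrt a * exp (- v/2); its moment of order -1 (against dw / w) is the
  Bessel function K_1. The NIG density is the normal variance-mean mixture of
  N(beta w, w) over an inverse Gaussian w, so it has total mass 1. And exp (- u s) / s is itself
  such a mixture of Gaussians in s, so Fubini and the Fourier transform of a Gaussian give, for u > 0,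
    int t sin (delta t) exp (- u S(t)) / S(t) dt = 2 alpha delta K_1 (alpha r) / r,
  with S(t) = sqrt (t^2 + alpha^2) and r = sqrt (delta^2 + u^2); this is
  2 pi exp (- delta gamma - beta u) times the density at mu + u. Multiplying by exp (beta u),
  integrating u over (x - mu, oo) and exchanging the integrals once more turns 1 - F(x) into a
  single integral over t, whose integrand is even in t.
*)

section \<open>Integration on the real line\<close>

lemma nn_integral_eq_SUP_indicator:
  fixes f :: "'a \<Rightarrow> ennreal"
  assumes "incseq A" and exhaust: "\<And>x. \<exists>n. x \<in> A n"
    and [measurable]: "f \<in> borel_measurable M" "\<And>n. A n \<in> sets M"
  shows "(\<integral>\<^sup>+x. f x \<partial>M) = (SUP n. \<integral>\<^sup>+x. f x * indicator (A n) x \<partial>M)"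
proof -
  have pointwise: "f x = (SUP n. f x * indicator (A n) x)" for x
  proof (rule antisym)
    obtain n where "x \<in> A n" using exhaust by blast
    then show "f x \<le> (SUP n. f x * indicator (A n) x)"
      by (intro SUP_upper2[of n]) auto
  qed (auto intro: SUP_least split: split_indicator)
  have "(\<integral>\<^sup>+x. f x \<partial>M) = (\<integral>\<^sup>+x. (SUP n. f x * indicator (A n) x) \<partial>M)"
    by (rule nn_integral_cong) (rule pointwise)
  also have "\<dots> = (SUP n. \<integral>\<^sup>+x. f x * indicator (A n) x \<partial>M)"
    using \<open>incseq A\<close>
    by (intro nn_integral_monotone_convergence_SUP)
       (auto simp: incseq_def le_fun_def subset_eq split: split_indicator)
  finally show ?thesis .
qed

lemma nn_integral_substitution_real_line:
  fixes f g g' :: "real \<Rightarrow> real"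
  assumes [measurable]: "f \<in> borel_measurable borel"
    and der: "\<And>x. (g has_real_derivative g' x) (at x)" and cont: "continuous_on UNIV g'"
    and nonneg: "\<And>x. g' x \<ge> 0"
    and top: "filterlim g at_top at_top" and bot: "filterlim g at_bot at_bot"
  shows "(\<integral>\<^sup>+x. ennreal (f x) \<partial>lborel) = (\<integral>\<^sup>+x. ennreal (f (g x) * g' x) \<partial>lborel)"
proof -
  have mono: "g a \<le> g b" if "a \<le> b" for a b
    by (rule deriv_nonneg_imp_mono[of a b g g']) (use der nonneg that in auto)
  have [measurable]: "g \<in> borel_measurable borel"
    using der by (intro borel_measurable_continuous_onI)
      (metis DERIV_isCont continuous_at_imp_continuous_on)
  have [measurable]: "g' \<in> borel_measurable borel"
    using cont by (rule borel_measurable_continuous_onI)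
  define A where "A n = {g (- real n)..g (real n)}" for n :: nat
  define B where "B n = {- real n..real n}" for n :: nat
  have "incseq A" "incseq B"
    unfolding A_def B_def incseq_def by (auto intro: order_trans[OF mono] mono)
  have "\<exists>n. x \<in> A n" for x
  proof -
    obtain N1 where "\<And>y. y \<ge> N1 \<Longrightarrow> g y \<ge> x"
      using top by (auto simp: filterlim_at_top eventually_at_top_linorder)
    moreover obtain N2 where "\<And>y. y \<le> N2 \<Longrightarrow> g y \<le> x"
      using bot by (auto simp: filterlim_at_bot eventually_at_bot_linorder)
    moreover obtain n :: nat where "real n \<ge> max N1 (- N2)"
      using real_arch_simple by blast
    ultimately show ?thesis
      unfolding A_def by (intro exI[of _ n]) force
  qed
  then have "(\<integral>\<^sup>+x. ennreal (f x) \<partial>lborel) =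
      (SUP n. \<integral>\<^sup>+x. ennreal (f x) * indicator (A n) x \<partial>lborel)"
    by (rule nn_integral_eq_SUP_indicator[OF \<open>incseq A\<close>]) (auto simp: A_def)
  also have "\<dots> = (SUP n. \<integral>\<^sup>+x. ennreal (f (g x) * g' x) * indicator (B n) x \<partial>lborel)"
  proof (rule SUP_cong[OF refl])
    fix n
    have "(\<integral>\<^sup>+x. ennreal (f x * indicator (A n) x) \<partial>lborel) =
        (\<integral>\<^sup>+x. ennreal (f (g x) * g' x * indicator (B n) x) \<partial>lborel)"
      unfolding A_def B_def
      by (rule nn_integral_substitution)
        (auto simp: set_borel_measurable_def intro: continuous_on_subset[OF cont] der nonneg)
    then show "(\<integral>\<^sup>+x. ennreal (f x) * indicator (A n) x \<partial>lborel) =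
        (\<integral>\<^sup>+x. ennreal (f (g x) * g' x) * indicator (B n) x \<partial>lborel)"
      by (simp only: nn_integral_set_ennreal)
  qed
  also have "\<dots> = (\<integral>\<^sup>+x. ennreal (f (g x) * g' x) \<partial>lborel)"
  proof (rule nn_integral_eq_SUP_indicator[OF \<open>incseq B\<close>, symmetric])
    fix x
    obtain n :: nat where "\<bar>x\<bar> \<le> real n" using real_arch_simple by blast
    then have "x \<in> B n" unfolding B_def by (auto simp: abs_le_iff)
    then show "\<exists>n. x \<in> B n" ..
  qed (auto simp: B_def)
  finally show ?thesis .
qed

lemma nn_integral_even:
  fixes g :: "real \<Rightarrow> real"
  assumes [measurable]: "g \<in> borel_measurable borel" and even: "\<And>x. g (- x) = g x"
  shows "(\<integral>\<^sup>+x. ennreal (g x) \<partial>lborel) = 2 * (\<integral>\<^sup>+x. ennreal (g x) * indicator {0..} x \<partial>lborel)"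
proof -
  have "(\<integral>\<^sup>+x. ennreal (g x) \<partial>lborel) =
     (\<integral>\<^sup>+x. ennreal (g x) * indicator {0..} x + ennreal (g x) * indicator {..<0} x \<partial>lborel)"
    by (intro nn_integral_cong) (auto split: split_indicator)
  also have "\<dots> = (\<integral>\<^sup>+x. ennreal (g x) * indicator {0..} x \<partial>lborel) +
      (\<integral>\<^sup>+x. ennreal (g x) * indicator {..<0} x \<partial>lborel)"
    by (rule nn_integral_add) auto
  also have "(\<integral>\<^sup>+x. ennreal (g x) * indicator {..<0} x \<partial>lborel) =
      ennreal \<bar>-1\<bar> * (\<integral>\<^sup>+x. ennreal (g (0 + (-1) * x)) * indicator {..<0} (0 + (-1) * x) \<partial>lborel)"
    by (rule nn_integral_real_affine) auto
  also have "\<dots> = (\<integral>\<^sup>+x. ennreal (g x) * indicator {0..} x \<partial>lborel)"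
    using AE_lborel_singleton[of 0]
    by (simp, intro nn_integral_cong_AE) (auto simp: even split: split_indicator elim!: eventually_mono)
  finally show ?thesis by (simp add: mult_2)
qed

lemma integral_even:
  fixes h :: "real \<Rightarrow> real"
  assumes "integrable lborel h" and even: "\<And>t. h (- t) = h t"
  shows "(LINT t|lborel. h t) = 2 * (LINT t:{0..}|lborel. h t)"
proof -
  have [measurable]: "h \<in> borel_measurable borel" using assms(1) by auto
  have int: "integrable lborel (\<lambda>t. indicator {0..} t * h t)"
    "integrable lborel (\<lambda>t. indicator {..<0} t * h t)"
    using integrable_mult_indicator[of _ lborel h] assms(1) by simp_all
  have "(LINT t|lborel. h t) = (LINT t|lborel. indicator {0..} t * h t + indicator {..<0} t * h t)"
    by (intro Bochner_Integration.integral_cong refl) (auto split: split_indicator)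
  also have "\<dots> = (LINT t|lborel. indicator {0..} t * h t) + (LINT t|lborel. indicator {..<0} t * h t)"
    using int by (rule Bochner_Integration.integral_add)
  also have "(LINT t|lborel. indicator {..<0} t * h t) =
      \<bar>-1\<bar> *\<^sub>R (LINT t|lborel. indicator {..<0} (0 + (-1) * t) * h (0 + (-1) * t))"
    by (rule lborel_integral_real_affine) simp
  also have "\<dots> = (LINT t|lborel. indicator {0..} t * h t)"
    using AE_lborel_singleton[of 0]
    by (simp, intro integral_cong_AE) (auto simp: even split: split_indicator elim!: eventually_mono)
  finally show ?thesis unfolding set_lebesgue_integral_def by simp
qed

lemma
  fixes c y :: real
  assumes "c > 0"
  shows set_integrable_exp_Ioi: "set_integrable lborel {y<..} (\<lambda>t. exp (- c * t))"
    and set_integral_exp_Ioi: "(LINT t:{y<..}|lborel. exp (- c * t)) = exp (- c * y) / c"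
proof -
  define F where "F t = - exp (- c * t) / c" for t
  have der: "DERIV F t :> exp (- c * t)" for t
    unfolding F_def using \<open>c > 0\<close> by (auto intro!: derivative_eq_intros)
  have at_y: "((F \<circ> real_of_ereal) \<longlongrightarrow> F y) (at_right (ereal y))"
    unfolding ereal_tendsto_simps F_def
    by (intro tendsto_intros continuous_on_tendsto_compose[of UNIV] tendsto_ident_at)
       (use \<open>c > 0\<close> in auto)
  have at_infinity: "((F \<circ> real_of_ereal) \<longlongrightarrow> 0) (at_left \<infinity>)"
    unfolding ereal_tendsto_simps F_def using \<open>c > 0\<close> by real_asymp
  note FTC = interval_integral_FTC_nonneg[of "ereal y" \<infinity> F "\<lambda>t. exp (- c * t)" "F y" 0,
      OF _ der _ _ at_y at_infinity]
  show "set_integrable lborel {y<..} (\<lambda>t. exp (- c * t))"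
    using FTC(1) by simp
  show "(LINT t:{y<..}|lborel. exp (- c * t)) = exp (- c * y) / c"
    using FTC(2) by (simp add: interval_integral_to_infinity_eq F_def)
qed

lemma nn_integral_exp_Ioi:
  fixes c y :: real
  assumes "c > 0"
  shows "(\<integral>\<^sup>+t. ennreal (indicator {y<..} t * exp (- c * t)) \<partial>lborel) = ennreal (exp (- c * y) / c)"
  using set_integrable_exp_Ioi[OF assms, of y] set_integral_exp_Ioi[OF assms, of y]
  unfolding set_integrable_def set_lebesgue_integral_def
  by (subst nn_integral_eq_integral) auto

lemma nn_integral_exp_abs:
  fixes c :: real
  assumes "c > 0"
  shows "(\<integral>\<^sup>+t. ennreal (exp (- c * \<bar>t\<bar>)) \<partial>lborel) = ennreal (2 / c)"
proof -
  have "(\<integral>\<^sup>+t. ennreal (exp (- c * \<bar>t\<bar>)) \<partial>lborel) =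
      2 * (\<integral>\<^sup>+t. ennreal (exp (- c * \<bar>t\<bar>)) * indicator {0..} t \<partial>lborel)"
    by (rule nn_integral_even) auto
  also have "(\<integral>\<^sup>+t. ennreal (exp (- c * \<bar>t\<bar>)) * indicator {0..} t \<partial>lborel) =
      (\<integral>\<^sup>+t. ennreal (indicator {0<..} t * exp (- c * t)) \<partial>lborel)"
    using AE_lborel_singleton[of 0]
    by (intro nn_integral_cong_AE) (auto split: split_indicator elim!: eventually_mono)
  also have "\<dots> = ennreal (1 / c)"
    using nn_integral_exp_Ioi[OF assms, of 0] by simp
  also have "2 * ennreal (1 / c) = ennreal (2 / c)"
    using assms by (subst ennreal_numeral[symmetric], subst ennreal_mult[symmetric]) auto
  finally show ?thesis .
qed

lemma integrable_exp_abs: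
  fixes c :: real
  assumes "c > 0"
  shows "integrable lborel (\<lambda>t. exp (- c * \<bar>t\<bar>))"
  by (rule integrableI_nonneg) (use nn_integral_exp_abs[OF assms] in auto)

lemma integrable_lborel_pair_product_bound:
  fixes F :: "real \<Rightarrow> real \<Rightarrow> real" and f g :: "real \<Rightarrow> real"
  assumes [measurable]: "case_prod F \<in> borel_measurable (lborel \<Otimes>\<^sub>M lborel)"
    and "integrable lborel f" "integrable lborel g" "\<And>x. f x \<ge> 0" "\<And>y. g y \<ge> 0"
    and bound: "\<And>x y. \<bar>F x y\<bar> \<le> f x * g y"
  shows "integrable (lborel \<Otimes>\<^sub>M lborel) (case_prod F)"
proof (rule integrableI_bounded)
  have [measurable]: "f \<in> borel_measurable borel" "g \<in> borel_measurable borel"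
    using assms(2,3) by auto
  have "(\<integral>\<^sup>+p. ennreal (norm (case_prod F p)) \<partial>(lborel \<Otimes>\<^sub>M lborel)) \<le>
      (\<integral>\<^sup>+p. ennreal (f (fst p)) * ennreal (g (snd p)) \<partial>(lborel \<Otimes>\<^sub>M lborel))"
    using bound assms(4,5) by (intro nn_integral_mono) (auto simp flip: ennreal_mult intro: ennreal_leI)
  also have "\<dots> = (\<integral>\<^sup>+x. \<integral>\<^sup>+y. ennreal (f x) * ennreal (g y) \<partial>lborel \<partial>lborel)"
    by (subst lborel.nn_integral_fst[symmetric]) auto
  also have "\<dots> = (\<integral>\<^sup>+x. ennreal (f x) \<partial>lborel) * (\<integral>\<^sup>+y. ennreal (g y) \<partial>lborel)"
    by (simp add: nn_integral_cmult nn_integral_multc)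
  also have "\<dots> < \<infinity>"
    using assms(2-5) by (simp add: integrable_iff_bounded ennreal_mult_less_top)
  finally show "(\<integral>\<^sup>+p. ennreal (norm (case_prod F p)) \<partial>(lborel \<Otimes>\<^sub>M lborel)) < \<infinity>" .
qed fact

section \<open>Gaussian integrals\<close>

lemma nn_integral_exp_minus_square: "(\<integral>\<^sup>+x. ennreal (exp (- x\<^sup>2)) \<partial>lborel) = ennreal (sqrt pi)"
proof -
  have density: "normal_density 0 (sqrt (1/2)) x = exp (- x\<^sup>2) / sqrt pi" for x
    by (simp add: normal_density_def real_sqrt_mult)
  have "(\<integral>\<^sup>+x. ennreal (normal_density 0 (sqrt (1/2)) x) \<partial>lborel) = 1"
    by (subst nn_integral_eq_integral) auto
  then have "ennreal (sqrt pi) * (\<integral>\<^sup>+x. ennreal (exp (- x\<^sup>2) / sqrt pi) \<partial>lborel) = ennreal (sqrt pi)"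
    by (simp add: density)
  moreover have "ennreal (sqrt pi) * (\<integral>\<^sup>+x. ennreal (exp (- x\<^sup>2) / sqrt pi) \<partial>lborel) =
      (\<integral>\<^sup>+x. ennreal (exp (- x\<^sup>2)) \<partial>lborel)"
    by (subst nn_integral_cmult[symmetric]) (auto simp: ennreal_mult[symmetric])
  ultimately show ?thesis by simp
qed

lemma integral_cos_gaussian:
  fixes \<tau> :: real
  shows "(LINT x|lborel. cos (\<tau> * x) * exp (- x\<^sup>2 / 2)) = sqrt (2*pi) * exp (- \<tau>\<^sup>2 / 2)"
proof -
  interpret real_distribution std_normal_distribution by (rule real_dist_normal_dist)
  have i: "integrable std_normal_distribution (\<lambda>x. iexp (\<tau> * x))"
    by (rule integrable_iexp) auto
  have "complex_of_real (exp (- \<tau>\<^sup>2 / 2)) = char std_normal_distribution \<tau>"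
    by (simp add: char_std_normal_distribution)
  also have "\<dots> = (LINT x|lborel. std_normal_density x *\<^sub>R iexp (\<tau> * x))"
    unfolding char_def by (rule integral_density) auto
  finally have "exp (- \<tau>\<^sup>2 / 2) = Re (LINT x|lborel. std_normal_density x *\<^sub>R iexp (\<tau> * x))"
    by (metis Re_complex_of_real)
  also have "\<dots> = (LINT x|lborel. Re (std_normal_density x *\<^sub>R iexp (\<tau> * x)))"
    using i by (subst integral_Re) (auto simp: integrable_density)
  also have "\<dots> = (LINT x|lborel. cos (\<tau> * x) * exp (- x\<^sup>2 / 2) / sqrt (2*pi))"
    by (intro Bochner_Integration.integral_cong refl) (simp add: std_normal_density_def Re_exp cos_of_real)
  finally show ?thesis by simp
qed

lemma exp_minus_scaled_square_eq_normal_density: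
  fixes w t :: real
  assumes w: "w > 0"
  shows "exp (- w * t\<^sup>2 / 2) = sqrt (2*pi) / sqrt w * normal_density 0 (1 / sqrt w) t"
  using w by (simp add: normal_density_def real_sqrt_mult real_sqrt_divide power_divide field_simps)

lemma integrable_gaussian:
  fixes w :: real
  assumes w: "w > 0"
  shows "integrable lborel (\<lambda>t. exp (- w * t\<^sup>2 / 2))"
  unfolding exp_minus_scaled_square_eq_normal_density[OF w]
  by (intro integrable_mult_right integrable_normal_density) (use w in auto)

lemma integrable_abs_mult_gaussian:
  fixes w :: real
  assumes w: "w > 0"
  shows "integrable lborel (\<lambda>t. \<bar>t\<bar> * exp (- w * t\<^sup>2 / 2))"
proof -
  have "integrable lborel (\<lambda>t. sqrt (2*pi) / sqrt w * (normal_density 0 (1 / sqrt w) t * \<bar>t - 0\<bar> ^ 1))"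
    by (intro integrable_mult_right integrable_normal_moment_abs) (use w in auto)
  then show ?thesis unfolding exp_minus_scaled_square_eq_normal_density[OF w] by (simp add: mult_ac)
qed

lemma integral_cos_gaussian_scaled:
  fixes w \<delta> :: real
  assumes w: "w > 0"
  shows "(LINT t|lborel. cos (\<delta> * t) * exp (- w * t\<^sup>2 / 2)) =
    sqrt (2*pi) * exp (- \<delta>\<^sup>2 / (2*w)) / sqrt w"
proof -
  have "sqrt (2*pi) * exp (- (\<delta> / sqrt w)\<^sup>2 / 2) =
      (LINT x|lborel. cos (\<delta> / sqrt w * x) * exp (- x\<^sup>2 / 2))"
    by (rule integral_cos_gaussian[symmetric])
  also have "\<dots> = \<bar>sqrt w\<bar> *\<^sub>R
      (LINT x|lborel. cos (\<delta> / sqrt w * (0 + sqrt w * x)) * exp (- (0 + sqrt w * x)\<^sup>2 / 2))"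
    by (rule lborel_integral_real_affine) (use w in auto)
  also have "\<dots> = sqrt w * (LINT t|lborel. cos (\<delta> * t) * exp (- w * t\<^sup>2 / 2))"
    using w by (simp add: power_mult_distrib)
  finally show ?thesis using w by (simp add: power_divide field_simps)
qed

lemma integral_eq_0_of_derivative_tendsto_0:
  fixes F f :: "real \<Rightarrow> real"
  assumes "\<And>x. (F has_real_derivative f x) (at x)" "continuous_on UNIV f" "integrable lborel f"
    and "(F \<longlongrightarrow> 0) at_top" "(F \<longlongrightarrow> 0) at_bot"
  shows "(LINT x|lborel. f x) = 0"
proof -
  have "(LBINT x=-\<infinity>..\<infinity>. f x) = 0 - 0"
  proof (rule interval_integral_FTC_integrable)
    show "(F has_vector_derivative f x) (at x)" for x
      using assms(1) has_real_derivative_iff_has_vector_derivative by blast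
    show "isCont f x" for x
      using assms(2) by (simp add: continuous_on_eq_continuous_at)
    show "set_integrable lborel (einterval (-\<infinity>) \<infinity>) f"
      using assms(3) by (simp add: set_integrable_def)
    show "((F \<circ> real_of_ereal) \<longlongrightarrow> 0) (at_right (-\<infinity>))"
      using assms(5) by (simp add: ereal_tendsto_simps)
    show "((F \<circ> real_of_ereal) \<longlongrightarrow> 0) (at_left \<infinity>)"
      using assms(4) by (simp add: ereal_tendsto_simps)
  qed auto
  then show ?thesis
    by (simp add: interval_lebesgue_integral_def set_lebesgue_integral_def)
qed

lemma integrable_sin_gaussian:
  fixes w \<delta> :: real
  assumes "w > 0"
  shows "integrable lborel (\<lambda>t. t * sin (\<delta> * t) * exp (- w * t\<^sup>2 / 2))"
  by (rule Bochner_Integration.integrable_bound[OF integrable_abs_mult_gaussian[OF assms]])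
     (auto simp: abs_mult intro!: mult_right_mono[OF mult_left_le] always_eventually)

lemma integral_sin_gaussian:
  fixes w \<delta> :: real
  assumes w: "w > 0"
  shows "(LINT t|lborel. t * sin (\<delta> * t) * exp (- w * t\<^sup>2 / 2)) =
    \<delta> * sqrt (2*pi) * exp (- \<delta>\<^sup>2 / (2*w)) / (w * sqrt w)"
proof -
  have int_cos: "integrable lborel (\<lambda>t. cos (\<delta> * t) * exp (- w * t\<^sup>2 / 2))"
    by (rule Bochner_Integration.integrable_bound[OF integrable_gaussian[OF w]])
       (auto simp: abs_mult intro!: mult_right_mono always_eventually)
  define F where "F t = - (1/w) * exp (- w * t\<^sup>2 / 2) * sin (\<delta> * t)" for t
  define f where "f t = t * sin (\<delta> * t) * exp (- w * t\<^sup>2 / 2) -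
      \<delta> / w * (cos (\<delta> * t) * exp (- w * t\<^sup>2 / 2))" for t
  have bound: "norm (F t) \<le> (1/w) * exp (- w * t\<^sup>2 / 2)" for t
    unfolding F_def using w abs_sin_le_one[of "\<delta> * t"]
    by (simp add: abs_mult mult_left_le divide_right_mono)
  have "((\<lambda>t. (1/w) * exp (- w * t\<^sup>2 / 2)) \<longlongrightarrow> 0) at_top"
    and "((\<lambda>t. (1/w) * exp (- w * t\<^sup>2 / 2)) \<longlongrightarrow> 0) at_bot"
    using w by real_asymp+
  then have "(F \<longlongrightarrow> 0) at_top" "(F \<longlongrightarrow> 0) at_bot"
    by (auto intro: Lim_null_comparison[OF always_eventually, OF allI, OF bound])
  moreover have "(F has_real_derivative f t) (at t)" for t
    unfolding F_def f_def using w
    by (auto intro!: derivative_eq_intros simp: field_simps power2_eq_square)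
  moreover have "continuous_on UNIV f"
    unfolding f_def by (intro continuous_intros) auto
  moreover have "integrable lborel f"
    unfolding f_def using integrable_sin_gaussian[OF w] int_cos by auto
  ultimately have "(LINT t|lborel. f t) = 0"
    by (intro integral_eq_0_of_derivative_tendsto_0)
  then have "(LINT t|lborel. t * sin (\<delta> * t) * exp (- w * t\<^sup>2 / 2)) =
      \<delta> / w * (LINT t|lborel. cos (\<delta> * t) * exp (- w * t\<^sup>2 / 2))"
    unfolding f_def using integrable_sin_gaussian[OF w] int_cos by simp
  then show ?thesis
    unfolding integral_cos_gaussian_scaled[OF w] by simp
qed

section \<open>The generalised inverse Gaussian kernel\<close>

text \<open>In the variable \<open>w = exp v\<close> this is the generalised inverse Gaussian kernel
  \<open>exp (- (a / w + b * w))\<close>; a factor \<open>exp (\<lambda> * v)\<close> in front of it plays the role of \<open>w powr \<lambda>\<close>.\<close>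
definition gig_kernel :: "real \<Rightarrow> real \<Rightarrow> real \<Rightarrow> real" where
  "gig_kernel a b v = exp (- (a * exp (- v) + b * exp v))"

lemma gig_kernel_nonneg [simp]: "gig_kernel a b v \<ge> 0"
  by (simp add: gig_kernel_def)

lemma borel_measurable_gig_kernel [measurable]:
  assumes [measurable]: "a \<in> borel_measurable M" "b \<in> borel_measurable M" "v \<in> borel_measurable M"
  shows "(\<lambda>x. gig_kernel (a x) (b x) (v x)) \<in> borel_measurable M"
  unfolding gig_kernel_def by measurable

lemma nn_integral_gig_kernel_half_reflect:
  assumes "a > 0" "b > 0"
  shows "(\<integral>\<^sup>+v. ennreal (exp (v/2) * gig_kernel a b v) \<partial>lborel) =
    ennreal (sqrt (a/b)) * (\<integral>\<^sup>+v. ennreal (exp (-v/2) * gig_kernel a b v) \<partial>lborel)"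
proof -
  define t where "t = ln (a/b)"
  have "exp t = a / b" using assms by (simp add: t_def)
  then have sum: "a * exp (x - t) + b * exp (t - x) = a * exp (-x) + b * exp x" for x
    using assms by (simp add: exp_diff exp_minus field_simps)
  have "exp (t/2) = sqrt (a/b)"
    using assms by (simp add: t_def powr_def[symmetric] powr_half_sqrt[symmetric] powr_def)
  moreover have "exp ((t - x)/2) = exp (t/2) * exp (-x/2)" for x
    by (simp add: exp_add[symmetric] diff_divide_distrib)
  ultimately have "exp ((t - x)/2) = sqrt (a/b) * exp (-x/2)" for x
    by simp
  then have reflect: "exp ((t - x)/2) * gig_kernel a b (t - x) =
      sqrt (a/b) * (exp (-x/2) * gig_kernel a b x)" for x
    unfolding gig_kernel_def minus_diff_eq sum by simp
  have "(\<integral>\<^sup>+v. ennreal (exp (v/2) * gig_kernel a b v) \<partial>lborel) =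
      ennreal \<bar>-1\<bar> * (\<integral>\<^sup>+x. ennreal (exp ((t + (-1) * x)/2) * gig_kernel a b (t + (-1) * x)) \<partial>lborel)"
    by (rule nn_integral_real_affine) auto
  also have "\<dots> = (\<integral>\<^sup>+x. ennreal (sqrt (a/b)) * ennreal (exp (-x/2) * gig_kernel a b x) \<partial>lborel)"
    using reflect assms by (simp add: ennreal_mult)
  also have "\<dots> = ennreal (sqrt (a/b)) * (\<integral>\<^sup>+v. ennreal (exp (-v/2) * gig_kernel a b v) \<partial>lborel)"
    by (rule nn_integral_cmult) measurable
  finally show ?thesis .
qed

lemma ennreal_mult_add_mult:
  fixes c p q A B :: real
  assumes "c \<ge> 0" "p \<ge> 0" "q \<ge> 0" "A \<ge> 0" "B \<ge> 0"
  shows "ennreal (c * (p * A + q * B)) = ennreal c * (ennreal p * ennreal A + ennreal q * ennreal B)"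
  using assms by (simp add: ennreal_mult[symmetric] ennreal_plus[symmetric] del: ennreal_plus)

text \<open>The substitution \<open>x = sqrt b * exp (v/2) - sqrt a * exp (-v/2)\<close> in the Gaussian integral
  turns \<open>exp (- x\<^sup>2)\<close> into \<open>exp (2 * sqrt (a * b)) * gig_kernel a b v\<close>.\<close>
lemma sqrt_pi_eq_nn_integral_gig_kernel_halves:
  assumes a: "a > 0" and b: "b > 0"
  shows "ennreal (sqrt pi) = ennreal (exp (2 * sqrt (a*b)) / 2) *
     (ennreal (sqrt b) * (\<integral>\<^sup>+v. ennreal (exp (v/2) * gig_kernel a b v) \<partial>lborel) +
      ennreal (sqrt a) * (\<integral>\<^sup>+v. ennreal (exp (-v/2) * gig_kernel a b v) \<partial>lborel))"
proof -
  define q where "q v = sqrt b * exp (v/2) - sqrt a * exp (-v/2)" for v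
  define q' where "q' v = (sqrt b * exp (v/2) + sqrt a * exp (-v/2)) / 2" for v
  have der: "(q has_real_derivative q' v) (at v)" for v
    unfolding q_def q'_def by (auto intro!: derivative_eq_intros simp: field_simps)
  have cont: "continuous_on UNIV q'"
    unfolding q'_def by (intro continuous_intros) auto
  have nonneg: "q' v \<ge> 0" for v
    unfolding q'_def using a b by simp
  have top: "filterlim q at_top at_top" and bot: "filterlim q at_bot at_bot"
    unfolding q_def using a b by real_asymp+
  have square: "(q v)\<^sup>2 = b * exp v + a * exp (-v) - 2 * sqrt (a*b)" for v
  proof -
    have "exp (v/2) * exp (v/2) = exp v" "exp (-v/2) * exp (-v/2) = exp (-v)"
      "exp (v/2) * exp (-v/2) = 1"
      by (simp_all add: exp_add[symmetric])
    then show ?thesis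
      unfolding q_def power2_eq_square using a b
      by (simp add: algebra_simps real_sqrt_mult) (simp add: mult.assoc[symmetric])
  qed
  have integrand: "exp (- (q v)\<^sup>2) * q' v = exp (2 * sqrt (a*b)) / 2 *
      (sqrt b * (exp (v/2) * gig_kernel a b v) + sqrt a * (exp (-v/2) * gig_kernel a b v))" for v
  proof -
    have "exp (- (q v)\<^sup>2) = exp (2 * sqrt (a*b)) * gig_kernel a b v"
      unfolding square gig_kernel_def by (simp add: exp_add[symmetric] algebra_simps)
    then show ?thesis unfolding q'_def by (simp add: algebra_simps)
  qed
  have "ennreal (sqrt pi) = (\<integral>\<^sup>+x. ennreal (exp (- x\<^sup>2)) \<partial>lborel)"
    by (rule nn_integral_exp_minus_square[symmetric])
  also have "\<dots> = (\<integral>\<^sup>+v. ennreal (exp (- (q v)\<^sup>2) * q' v) \<partial>lborel)"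
    by (rule nn_integral_substitution_real_line[OF _ der cont nonneg top bot]) measurable
  also have "\<dots> = (\<integral>\<^sup>+v. ennreal (exp (2 * sqrt (a*b)) / 2) *
       (ennreal (sqrt b) * ennreal (exp (v/2) * gig_kernel a b v) +
        ennreal (sqrt a) * ennreal (exp (-v/2) * gig_kernel a b v)) \<partial>lborel)"
    unfolding integrand using a b by (intro nn_integral_cong ennreal_mult_add_mult) auto
  also have "\<dots> = ennreal (exp (2 * sqrt (a*b)) / 2) *
     (ennreal (sqrt b) * (\<integral>\<^sup>+v. ennreal (exp (v/2) * gig_kernel a b v) \<partial>lborel) +
      ennreal (sqrt a) * (\<integral>\<^sup>+v. ennreal (exp (-v/2) * gig_kernel a b v) \<partial>lborel))"
    by (simp add: nn_integral_cmult nn_integral_add)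
  finally show ?thesis .
qed

lemma nn_integral_gig_kernel_minus_half:
  assumes a: "a > 0" and b: "b > 0"
  shows "(\<integral>\<^sup>+v. ennreal (exp (-v/2) * gig_kernel a b v) \<partial>lborel) =
    ennreal (sqrt (pi/a) * exp (- 2 * sqrt (a*b)))"
proof -
  define X where "X = (\<integral>\<^sup>+v. ennreal (exp (-v/2) * gig_kernel a b v) \<partial>lborel)"
  define c where "c = exp (2 * sqrt (a*b)) * sqrt a"
  have c: "c > 0" unfolding c_def using a by simp
  have "ennreal (sqrt pi) = ennreal (exp (2 * sqrt (a*b)) / 2) *
      (ennreal (sqrt b) * (ennreal (sqrt (a/b)) * X) + ennreal (sqrt a) * X)"
    using sqrt_pi_eq_nn_integral_gig_kernel_halves[OF a b] nn_integral_gig_kernel_half_reflect[OF a b]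
    unfolding X_def by simp
  also have "ennreal (sqrt b) * (ennreal (sqrt (a/b)) * X) = ennreal (sqrt a) * X"
    using a b by (simp add: ennreal_mult[symmetric] mult.assoc[symmetric] real_sqrt_mult[symmetric])
  also have "ennreal (exp (2 * sqrt (a*b)) / 2) * (ennreal (sqrt a) * X + ennreal (sqrt a) * X) =
      ennreal c * X"
  proof -
    have "ennreal (exp (2 * sqrt (a*b)) / 2) * 2 = ennreal (exp (2 * sqrt (a*b)))"
      by (subst ennreal_numeral[symmetric], subst ennreal_mult[symmetric]) auto
    then show ?thesis
      unfolding c_def using a by (simp add: mult_2[symmetric] mult.assoc[symmetric] ennreal_mult)
  qed
  finally have "ennreal (sqrt pi) = ennreal c * X" .
  then have "X = ennreal (sqrt pi / c)"
    using c by (simp add: divide_ennreal[symmetric] ennreal_mult_divide_eq mult.commute)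
  also have "sqrt pi / c = sqrt (pi/a) * exp (- 2 * sqrt (a*b))"
    unfolding c_def using a by (simp add: real_sqrt_divide exp_minus field_simps)
  finally show ?thesis unfolding X_def .
qed

lemma nn_integral_gig_kernel_half:
  assumes a: "a > 0" and b: "b > 0"
  shows "(\<integral>\<^sup>+v. ennreal (exp (v/2) * gig_kernel a b v) \<partial>lborel) =
    ennreal (sqrt (pi/b) * exp (- 2 * sqrt (a*b)))"
proof -
  have "(\<integral>\<^sup>+v. ennreal (exp (v/2) * gig_kernel a b v) \<partial>lborel) =
      ennreal (sqrt (a/b)) * ennreal (sqrt (pi/a) * exp (- 2 * sqrt (a*b)))"
    using nn_integral_gig_kernel_half_reflect[OF a b] nn_integral_gig_kernel_minus_half[OF a b] by simp
  also have "\<dots> = ennreal (sqrt (pi/b) * exp (- 2 * sqrt (a*b)))"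
    using a b by (simp add: ennreal_mult[symmetric] real_sqrt_divide field_simps)
  finally show ?thesis .
qed

lemma nn_integral_gig_kernel_half_squares:
  fixes u s :: real
  assumes "u > 0" "s > 0"
  shows "(\<integral>\<^sup>+v. ennreal (exp (v/2) * gig_kernel (u\<^sup>2/2) (s\<^sup>2/2) v) \<partial>lborel) =
    ennreal (sqrt (2*pi) * exp (- u * s) / s)"
proof -
  have "sqrt (pi / (s\<^sup>2/2)) = sqrt (2*pi) / s"
    using assms by (simp add: real_sqrt_divide real_sqrt_mult field_simps)
  moreover have "2 * sqrt (u\<^sup>2/2 * (s\<^sup>2/2)) = u * s"
    using assms by (simp add: real_sqrt_mult real_sqrt_divide power_mult_distrib[symmetric])
  ultimately show ?thesis
    using nn_integral_gig_kernel_half[of "u\<^sup>2/2" "s\<^sup>2/2"] assms by simp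
qed

lemma integral_gig_kernel_half_squares:
  fixes u s :: real
  assumes "u > 0" "s > 0"
  shows "(LINT v|lborel. exp (v/2) * gig_kernel (u\<^sup>2/2) (s\<^sup>2/2) v) = sqrt (2*pi) * exp (- u * s) / s"
  using nn_integral_eq_integrable[THEN iffD1, OF _ _ _ nn_integral_gig_kernel_half_squares[OF assms]] assms
  by auto

lemma le_mult_exp_half_square:
  fixes a y :: real
  assumes "a > 0"
  shows "y \<le> (1/a + 1) * exp (a/2 * y\<^sup>2)"
proof -
  have "a * y \<le> 1 + a\<^sup>2 * y\<^sup>2 / 4"
    using sum_squares_ge_zero[of "a*y/2 - 1" 0] by (simp add: power2_eq_square algebra_simps)
  then have "y \<le> 1/a + a * y\<^sup>2/4"
    using assms by (simp add: field_simps power2_eq_square)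
  also have "\<dots> \<le> (1/a + 1) * (1 + a/2 * y\<^sup>2)"
    using assms by (simp add: field_simps power2_eq_square)
  also have "\<dots> \<le> (1/a + 1) * exp (a/2 * y\<^sup>2)"
    using assms by (intro mult_left_mono exp_ge_add_one_self) auto
  finally show ?thesis .
qed

lemma nn_integral_gig_kernel_minus_one_finite:
  assumes a: "a > 0" and b: "b > 0"
  shows "(\<integral>\<^sup>+v. ennreal (exp (-v) * gig_kernel a b v) \<partial>lborel) < \<infinity>"
proof -
  have bound: "exp (-v) * gig_kernel a b v \<le> (1/a + 1) * (exp (-v/2) * gig_kernel (a/2) b v)" for v
  proof -
    have split: "gig_kernel a b v = exp (- (a/2 * exp (-v))) * gig_kernel (a/2) b v"
      by (simp add: gig_kernel_def exp_add[symmetric] algebra_simps)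
    have square: "(exp (-v/2))\<^sup>2 = exp (-v)"
      by (simp add: power2_eq_square exp_add[symmetric])
    have "exp (-v) * gig_kernel a b v =
        exp (-v/2) * (exp (-v/2) * exp (- (a/2 * exp (-v)))) * gig_kernel (a/2) b v"
      by (simp add: split exp_add[symmetric])
    also have "\<dots> \<le> exp (-v/2) * ((1/a + 1) * exp (a/2 * exp (-v)) * exp (- (a/2 * exp (-v)))) *
        gig_kernel (a/2) b v"
      using le_mult_exp_half_square[OF a, of "exp (-v/2)"] unfolding square
      by (intro mult_right_mono mult_left_mono) auto
    also have "\<dots> = (1/a + 1) * (exp (-v/2) * gig_kernel (a/2) b v)"
      by (simp add: exp_minus field_simps)
    finally show ?thesis .
  qed
  have "(\<integral>\<^sup>+v. ennreal (exp (-v) * gig_kernel a b v) \<partial>lborel) \<le>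
      (\<integral>\<^sup>+v. ennreal ((1/a + 1) * (exp (-v/2) * gig_kernel (a/2) b v)) \<partial>lborel)"
    using bound by (intro nn_integral_mono ennreal_leI)
  also have "\<dots> = (\<integral>\<^sup>+v. ennreal (1/a + 1) * ennreal (exp (-v/2) * gig_kernel (a/2) b v) \<partial>lborel)"
    using a by (intro nn_integral_cong ennreal_mult) auto
  also have "\<dots> = ennreal (1/a + 1) * (\<integral>\<^sup>+v. ennreal (exp (-v/2) * gig_kernel (a/2) b v) \<partial>lborel)"
    by (rule nn_integral_cmult) measurable
  also have "\<dots> < \<infinity>"
    using a b nn_integral_gig_kernel_minus_half[of "a/2" b] by (simp add: ennreal_mult_less_top)
  finally show ?thesis .
qed

lemma borel_measurable_cosh [measurable]: "(cosh :: real \<Rightarrow> real) \<in> borel_measurable borel"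
  by (intro borel_measurable_continuous_onI continuous_intros)

lemma nn_integral_exp_minus_even:
  fixes h :: "real \<Rightarrow> real"
  assumes [measurable]: "h \<in> borel_measurable borel"
    and nonneg: "\<And>x. h x \<ge> 0" and even: "\<And>x. h (- x) = h x"
  shows "(\<integral>\<^sup>+x. ennreal (exp (- x) * h x) \<partial>lborel) =
    2 * (\<integral>\<^sup>+x. ennreal (h x * cosh x) * indicator {0..} x \<partial>lborel)"
proof -
  have "(\<integral>\<^sup>+x. ennreal (exp (- x) * h x) \<partial>lborel) = (\<integral>\<^sup>+x. ennreal (exp x * h x) \<partial>lborel)"
    using nn_integral_real_affine[of "\<lambda>x. ennreal (exp (- x) * h x)" "-1" 0] even by simp
  then have "2 * (\<integral>\<^sup>+x. ennreal (exp (- x) * h x) \<partial>lborel) =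
      (\<integral>\<^sup>+x. ennreal (exp (- x) * h x) \<partial>lborel) + (\<integral>\<^sup>+x. ennreal (exp x * h x) \<partial>lborel)"
    by (simp add: mult_2)
  also have "\<dots> = (\<integral>\<^sup>+x. ennreal (exp (- x) * h x) + ennreal (exp x * h x) \<partial>lborel)"
    by (rule nn_integral_add[symmetric]) auto
  also have "\<dots> = (\<integral>\<^sup>+x. 2 * ennreal (h x * cosh x) \<partial>lborel)"
  proof (rule nn_integral_cong)
    fix x
    have "exp (- x) * h x + exp x * h x = 2 * (h x * cosh x)"
      by (simp add: cosh_field_def field_simps)
    then have "ennreal (exp (- x) * h x) + ennreal (exp x * h x) = ennreal (2 * (h x * cosh x))"
      using nonneg[of x] by (simp flip: ennreal_plus)
    then show "ennreal (exp (- x) * h x) + ennreal (exp x * h x) = 2 * ennreal (h x * cosh x)"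
      by (simp add: ennreal_mult')
  qed
  also have "\<dots> = 2 * (\<integral>\<^sup>+x. ennreal (h x * cosh x) \<partial>lborel)"
    by (rule nn_integral_cmult) measurable
  also have "(\<integral>\<^sup>+x. ennreal (h x * cosh x) \<partial>lborel) =
      2 * (\<integral>\<^sup>+x. ennreal (h x * cosh x) * indicator {0..} x \<partial>lborel)"
    by (rule nn_integral_even) (auto simp: even)
  finally have "2 * (\<integral>\<^sup>+x. ennreal (exp (- x) * h x) \<partial>lborel) =
      2 * (2 * (\<integral>\<^sup>+x. ennreal (h x * cosh x) * indicator {0..} x \<partial>lborel))" .
  then show ?thesis
    by (subst (asm) ennreal_mult_cancel_left) auto
qed

lemma besselK1_nonneg: "besselK1 z \<ge> 0"
  unfolding besselK1_def set_lebesgue_integral_def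
  by (intro Bochner_Integration.integral_nonneg) auto

lemma nn_integral_besselK1:
  assumes "(\<integral>\<^sup>+s. ennreal (exp (- z * cosh s) * cosh s) * indicator {0..} s \<partial>lborel) < \<infinity>"
  shows "(\<integral>\<^sup>+s. ennreal (exp (- z * cosh s) * cosh s) * indicator {0..} s \<partial>lborel) = ennreal (besselK1 z)"
proof -
  have eq: "(\<integral>\<^sup>+s. ennreal (exp (- z * cosh s) * cosh s) * indicator {0..} s \<partial>lborel) =
      (\<integral>\<^sup>+s. ennreal (indicator {0..} s *\<^sub>R (exp (- z * cosh s) * cosh s)) \<partial>lborel)"
    by (intro nn_integral_cong) (auto split: split_indicator)
  have "integrable lborel (\<lambda>s. indicator {0..} s *\<^sub>R (exp (- z * cosh s) * cosh s))"
    using assms unfolding eq by (intro integrableI_nonneg) auto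
  then show ?thesis
    unfolding eq besselK1_def set_lebesgue_integral_def by (intro nn_integral_eq_integral) auto
qed

lemma gig_kernel_shift_eq_cosh:
  fixes \<alpha> r x :: real
  assumes "\<alpha> > 0" "r > 0"
  defines "t \<equiv> ln (r / \<alpha>)"
  shows "exp (- (t + x)) * gig_kernel (r\<^sup>2/2) (\<alpha>\<^sup>2/2) (t + x) =
    \<alpha> / r * (exp (- x) * exp (- (\<alpha> * r) * cosh x))"
proof -
  have "exp t = r / \<alpha>" using assms by simp
  moreover have "exp (- (t + x)) = exp (- t) * exp (- x)" "exp (t + x) = exp t * exp x"
    by (simp_all flip: exp_add)
  ultimately have shifted: "exp (- (t + x)) = \<alpha> / r * exp (- x)" "exp (t + x) = r / \<alpha> * exp x"
    by (simp_all add: exp_minus[of t])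
  then have "r\<^sup>2/2 * exp (- (t + x)) + \<alpha>\<^sup>2/2 * exp (t + x) = \<alpha> * r * cosh x"
    using assms by (simp add: cosh_field_def power2_eq_square field_simps)
  then have "exp (- (t + x)) * gig_kernel (r\<^sup>2/2) (\<alpha>\<^sup>2/2) (t + x) =
      exp (- (t + x)) * exp (- (\<alpha> * r * cosh x))"
    unfolding gig_kernel_def by simp
  then show ?thesis
    unfolding shifted(1) by simp
qed

lemma nn_integral_gig_kernel_besselK1:
  fixes \<alpha> r :: real
  assumes "\<alpha> > 0" "r > 0"
  shows "(\<integral>\<^sup>+v. ennreal (exp (- v) * gig_kernel (r\<^sup>2/2) (\<alpha>\<^sup>2/2) v) \<partial>lborel) =
    ennreal (2 * \<alpha> / r * besselK1 (\<alpha> * r))"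
proof -
  define t where "t = ln (r / \<alpha>)"
  define k where "k x = exp (- (\<alpha> * r) * cosh x)" for x
  have "(\<integral>\<^sup>+v. ennreal (exp (- v) * gig_kernel (r\<^sup>2/2) (\<alpha>\<^sup>2/2) v) \<partial>lborel) =
      ennreal \<bar>1\<bar> * (\<integral>\<^sup>+x. ennreal (exp (- (t + 1 * x)) * gig_kernel (r\<^sup>2/2) (\<alpha>\<^sup>2/2) (t + 1 * x)) \<partial>lborel)"
    by (rule nn_integral_real_affine) auto
  also have "\<dots> = (\<integral>\<^sup>+x. ennreal (\<alpha> / r * (exp (- x) * k x)) \<partial>lborel)"
    unfolding t_def k_def by (simp only: abs_one ennreal_1 mult_1_left gig_kernel_shift_eq_cosh[OF assms])
  also have "\<dots> = (\<integral>\<^sup>+x. ennreal (\<alpha> / r) * ennreal (exp (- x) * k x) \<partial>lborel)"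
    using assms by (intro nn_integral_cong ennreal_mult) (auto simp: k_def)
  also have "\<dots> = ennreal (\<alpha> / r) * (\<integral>\<^sup>+x. ennreal (exp (- x) * k x) \<partial>lborel)"
    unfolding k_def by (rule nn_integral_cmult) measurable
  also have "(\<integral>\<^sup>+x. ennreal (exp (- x) * k x) \<partial>lborel) =
      2 * (\<integral>\<^sup>+x. ennreal (k x * cosh x) * indicator {0..} x \<partial>lborel)"
    unfolding k_def by (rule nn_integral_exp_minus_even) auto
  finally have main: "(\<integral>\<^sup>+v. ennreal (exp (- v) * gig_kernel (r\<^sup>2/2) (\<alpha>\<^sup>2/2) v) \<partial>lborel) =
      ennreal (\<alpha> / r) * (2 * (\<integral>\<^sup>+x. ennreal (k x * cosh x) * indicator {0..} x \<partial>lborel))" .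
  then have "(\<integral>\<^sup>+x. ennreal (k x * cosh x) * indicator {0..} x \<partial>lborel) < \<infinity>"
    using nn_integral_gig_kernel_minus_one_finite[of "r\<^sup>2/2" "\<alpha>\<^sup>2/2"] assms
    by (auto simp: ennreal_mult_less_top top_unique)
  then have "(\<integral>\<^sup>+x. ennreal (k x * cosh x) * indicator {0..} x \<partial>lborel) = ennreal (besselK1 (\<alpha> * r))"
    unfolding k_def by (rule nn_integral_besselK1)
  moreover have "ennreal (\<alpha> / r * (2 * besselK1 (\<alpha> * r))) =
      ennreal (\<alpha> / r) * ennreal (2 * besselK1 (\<alpha> * r))"
    using assms besselK1_nonneg by (intro ennreal_mult) auto
  ultimately show ?thesis
    using main by (simp add: ennreal_mult' mult.left_commute mult.assoc)
qed

lemma integral_gig_kernel_besselK1: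
  fixes \<alpha> r :: real
  assumes "\<alpha> > 0" "r > 0"
  shows "(LINT v|lborel. exp (- v) * gig_kernel (r\<^sup>2/2) (\<alpha>\<^sup>2/2) v) = 2 * \<alpha> / r * besselK1 (\<alpha> * r)"
  using nn_integral_eq_integrable[THEN iffD1, OF _ _ _ nn_integral_gig_kernel_besselK1[OF assms]]
    assms besselK1_nonneg
  by auto

section \<open>The normal inverse Gaussian distribution\<close>

lemma nig_density_eq:
  "nig_density \<alpha> \<beta> \<mu> \<delta> x = \<alpha> * \<delta> / pi * besselK1 (\<alpha> * sqrt (\<delta>\<^sup>2 + (x - \<mu>)\<^sup>2)) /
    sqrt (\<delta>\<^sup>2 + (x - \<mu>)\<^sup>2) * exp (\<delta> * sqrt (\<alpha>\<^sup>2 - \<beta>\<^sup>2) + \<beta> * (x - \<mu>))"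
  unfolding nig_density_def Let_def ..

lemma nig_density_shift: "nig_density \<alpha> \<beta> \<mu> \<delta> x = nig_density \<alpha> \<beta> 0 \<delta> (x - \<mu>)"
  unfolding nig_density_eq by simp

lemma nig_density_nonneg:
  assumes "\<alpha> > 0" "\<delta> > 0"
  shows "nig_density \<alpha> \<beta> \<mu> \<delta> x \<ge> 0"
  unfolding nig_density_eq using assms besselK1_nonneg by simp

lemma borel_measurable_nig_density [measurable]: "nig_density \<alpha> \<beta> \<mu> \<delta> \<in> borel_measurable borel"
  unfolding nig_density_def[abs_def] Let_def besselK1_def set_lebesgue_integral_def by measurable

lemma ennreal_nig_density_eq_nn_integral:
  fixes \<alpha> \<beta> \<delta> u :: real
  assumes "\<alpha> > 0" "\<delta> > 0"
  shows "ennreal (nig_density \<alpha> \<beta> 0 \<delta> u) = (\<integral>\<^sup>+v. ennreal (\<delta> / (2*pi) *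
    exp (\<delta> * sqrt (\<alpha>\<^sup>2 - \<beta>\<^sup>2) + \<beta> * u) * (exp (- v) * gig_kernel ((\<delta>\<^sup>2 + u\<^sup>2)/2) (\<alpha>\<^sup>2/2) v)) \<partial>lborel)"
proof -
  define r where "r = sqrt (\<delta>\<^sup>2 + u\<^sup>2)"
  define c where "c = \<delta> / (2*pi) * exp (\<delta> * sqrt (\<alpha>\<^sup>2 - \<beta>\<^sup>2) + \<beta> * u)"
  have r: "r > 0" and r_square: "\<delta>\<^sup>2 + u\<^sup>2 = r\<^sup>2"
    unfolding r_def using assms by (simp_all add: add_pos_nonneg)
  have c: "c \<ge> 0" unfolding c_def using assms by simp
  have "(\<integral>\<^sup>+v. ennreal (c * (exp (- v) * gig_kernel (r\<^sup>2/2) (\<alpha>\<^sup>2/2) v)) \<partial>lborel) =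
      (\<integral>\<^sup>+v. ennreal c * ennreal (exp (- v) * gig_kernel (r\<^sup>2/2) (\<alpha>\<^sup>2/2) v) \<partial>lborel)"
    using c by (intro nn_integral_cong ennreal_mult) auto
  also have "\<dots> = ennreal c * ennreal (2 * \<alpha> / r * besselK1 (\<alpha> * r))"
    using nn_integral_gig_kernel_besselK1[OF \<open>\<alpha> > 0\<close> r] by (simp add: nn_integral_cmult)
  also have "\<dots> = ennreal (c * (2 * \<alpha> / r * besselK1 (\<alpha> * r)))"
    using c r assms besselK1_nonneg by (intro ennreal_mult[symmetric]) auto
  also have "c * (2 * \<alpha> / r * besselK1 (\<alpha> * r)) = nig_density \<alpha> \<beta> 0 \<delta> u"
    unfolding nig_density_eq c_def r_def by simp
  finally show ?thesis
    unfolding r_square c_def ..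
qed

text \<open>The normal inverse Gaussian law is the normal variance-mean mixture of \<open>N(\<beta> W, W)\<close> over an
  inverse Gaussian variable \<open>W = exp v\<close>; this is that identity at the level of densities.\<close>
lemma nig_mixture_eq_normal_density:
  fixes \<alpha> \<beta> \<gamma> \<delta> u v :: real
  assumes \<gamma>: "\<gamma>\<^sup>2 = \<alpha>\<^sup>2 - \<beta>\<^sup>2"
  shows "\<delta> / (2*pi) * exp (\<delta> * \<gamma> + \<beta> * u) * (exp (- v) * gig_kernel ((\<delta>\<^sup>2 + u\<^sup>2)/2) (\<alpha>\<^sup>2/2) v) =
    \<delta> * exp (\<delta> * \<gamma>) / sqrt (2*pi) * (exp (- v/2) * gig_kernel (\<delta>\<^sup>2/2) (\<gamma>\<^sup>2/2) v) *
    normal_density (\<beta> * exp v) (sqrt (exp v)) u"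
proof -
  define W where "W = exp v"
  define P where "P = (u - \<beta> * W)\<^sup>2 / (2 * W)"
  define X where "X = exp (- (\<delta>\<^sup>2/2 * exp (- v) + \<alpha>\<^sup>2/2 * W))"
  define Y where "Y = exp (\<beta>\<^sup>2 * W / 2)"
  define N where "N = normal_density (\<beta> * W) (sqrt W) u"
  have W: "W > 0" unfolding W_def by simp
  have sqrt_W: "sqrt W = exp (v/2)"
    unfolding W_def by (rule real_sqrt_unique) (simp_all add: power2_eq_square exp_add[symmetric])
  have "\<beta> * u - u\<^sup>2 / (2 * W) = \<beta>\<^sup>2 * W / 2 + (- P)"
    unfolding P_def using W by (simp add: field_simps power2_eq_square)
  then have "exp (\<beta> * u - u\<^sup>2 / (2 * W)) = Y * exp (- P)"
    unfolding Y_def by (simp only: exp_add)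
  also have "exp (- P) = sqrt (2*pi*W) * N"
    unfolding N_def normal_density_def P_def using W by simp
  finally have completed_square: "exp (\<beta> * u - u\<^sup>2 / (2 * W)) = sqrt (2*pi*W) * Y * N"
    by simp
  have "\<delta> / (2*pi) * exp (\<delta> * \<gamma> + \<beta> * u) * (exp (- v) * gig_kernel ((\<delta>\<^sup>2 + u\<^sup>2)/2) (\<alpha>\<^sup>2/2) v) =
      \<delta> / (2*pi) * exp (\<delta> * \<gamma>) * exp (- v) * X * exp (\<beta> * u - u\<^sup>2 / (2 * W))"
    unfolding gig_kernel_def X_def W_def by (simp add: exp_add[symmetric] exp_minus field_simps)
  also have "\<dots> = (\<delta> / (2*pi) * sqrt (2*pi)) * exp (\<delta> * \<gamma>) * (exp (- v) * sqrt W) * (X * Y) * N"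
    unfolding completed_square real_sqrt_mult[of "2*pi"] by (simp only: mult_ac)
  also have "exp (- v) * sqrt W = exp (- v/2)"
    unfolding sqrt_W by (simp add: exp_add[symmetric])
  also have "X * Y = gig_kernel (\<delta>\<^sup>2/2) (\<gamma>\<^sup>2/2) v"
    unfolding X_def Y_def gig_kernel_def \<gamma> W_def by (simp add: exp_add[symmetric] field_simps)
  also have "\<delta> / (2*pi) * sqrt (2*pi) = \<delta> / sqrt (2*pi)"
    by (simp add: field_simps real_sqrt_mult)
  finally show ?thesis
    unfolding N_def W_def by (simp add: field_simps)
qed

lemma nn_integral_nig_mixture:
  fixes \<alpha> \<beta> \<gamma> \<delta> v :: real
  assumes "\<gamma>\<^sup>2 = \<alpha>\<^sup>2 - \<beta>\<^sup>2" "\<delta> > 0"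
  shows "(\<integral>\<^sup>+u. ennreal (\<delta> / (2*pi) * exp (\<delta> * \<gamma> + \<beta> * u) *
      (exp (- v) * gig_kernel ((\<delta>\<^sup>2 + u\<^sup>2)/2) (\<alpha>\<^sup>2/2) v)) \<partial>lborel) =
    ennreal (\<delta> * exp (\<delta> * \<gamma>) / sqrt (2*pi)) * ennreal (exp (- v/2) * gig_kernel (\<delta>\<^sup>2/2) (\<gamma>\<^sup>2/2) v)"
proof -
  define c where "c = \<delta> * exp (\<delta> * \<gamma>) / sqrt (2*pi) * (exp (- v/2) * gig_kernel (\<delta>\<^sup>2/2) (\<gamma>\<^sup>2/2) v)"
  have c: "c \<ge> 0" unfolding c_def using assms by simp
  have "(\<integral>\<^sup>+u. ennreal (\<delta> / (2*pi) * exp (\<delta> * \<gamma> + \<beta> * u) *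
      (exp (- v) * gig_kernel ((\<delta>\<^sup>2 + u\<^sup>2)/2) (\<alpha>\<^sup>2/2) v)) \<partial>lborel) =
      (\<integral>\<^sup>+u. ennreal c * ennreal (normal_density (\<beta> * exp v) (sqrt (exp v)) u) \<partial>lborel)"
    unfolding nig_mixture_eq_normal_density[OF assms(1)] c_def using c
    by (intro nn_integral_cong ennreal_mult) (auto simp: c_def)
  also have "\<dots> = ennreal c * (\<integral>\<^sup>+u. ennreal (normal_density (\<beta> * exp v) (sqrt (exp v)) u) \<partial>lborel)"
    by (rule nn_integral_cmult) measurable
  also have "(\<integral>\<^sup>+u. ennreal (normal_density (\<beta> * exp v) (sqrt (exp v)) u) \<partial>lborel) = 1"
    by (subst nn_integral_eq_integral) auto
  also have "ennreal c * 1 = ennreal (\<delta> * exp (\<delta> * \<gamma>) / sqrt (2*pi)) *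
      ennreal (exp (- v/2) * gig_kernel (\<delta>\<^sup>2/2) (\<gamma>\<^sup>2/2) v)"
    unfolding c_def mult_1_right using assms by (intro ennreal_mult) auto
  finally show ?thesis .
qed

lemma nn_integral_nig_density:
  fixes \<alpha> \<beta> \<delta> :: real
  assumes "\<alpha> > 0" "\<bar>\<beta>\<bar> < \<alpha>" "\<delta> > 0"
  shows "(\<integral>\<^sup>+u. ennreal (nig_density \<alpha> \<beta> 0 \<delta> u) \<partial>lborel) = 1"
proof -
  define \<gamma> where "\<gamma> = sqrt (\<alpha>\<^sup>2 - \<beta>\<^sup>2)"
  have "\<bar>\<beta>\<bar>\<^sup>2 < \<alpha>\<^sup>2"
    using assms by (intro power_strict_mono) auto
  then have \<gamma>: "\<gamma> > 0" "\<gamma>\<^sup>2 = \<alpha>\<^sup>2 - \<beta>\<^sup>2"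
    unfolding \<gamma>_def by simp_all
  define c where "c = \<delta> * exp (\<delta> * \<gamma>) / sqrt (2*pi)"
  have c: "c > 0" unfolding c_def using assms by simp
  have "(\<integral>\<^sup>+u. ennreal (nig_density \<alpha> \<beta> 0 \<delta> u) \<partial>lborel) = (\<integral>\<^sup>+u. \<integral>\<^sup>+v. ennreal (\<delta> / (2*pi) *
      exp (\<delta> * \<gamma> + \<beta> * u) * (exp (- v) * gig_kernel ((\<delta>\<^sup>2 + u\<^sup>2)/2) (\<alpha>\<^sup>2/2) v)) \<partial>lborel \<partial>lborel)"
    unfolding \<gamma>_def using assms by (simp add: ennreal_nig_density_eq_nn_integral)
  also have "\<dots> = (\<integral>\<^sup>+v. \<integral>\<^sup>+u. ennreal (\<delta> / (2*pi) *
      exp (\<delta> * \<gamma> + \<beta> * u) * (exp (- v) * gig_kernel ((\<delta>\<^sup>2 + u\<^sup>2)/2) (\<alpha>\<^sup>2/2) v)) \<partial>lborel \<partial>lborel)"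
    by (rule lborel_pair.Fubini'[symmetric]) measurable
  also have "\<dots> = (\<integral>\<^sup>+v. ennreal c * ennreal (exp (- v/2) * gig_kernel (\<delta>\<^sup>2/2) (\<gamma>\<^sup>2/2) v) \<partial>lborel)"
    unfolding nn_integral_nig_mixture[OF \<gamma>(2) assms(3)] c_def ..
  also have "\<dots> = ennreal c * (\<integral>\<^sup>+v. ennreal (exp (- v/2) * gig_kernel (\<delta>\<^sup>2/2) (\<gamma>\<^sup>2/2) v) \<partial>lborel)"
    by (rule nn_integral_cmult) measurable
  also have "\<dots> = ennreal c * ennreal (sqrt (pi / (\<delta>\<^sup>2/2)) * exp (- 2 * sqrt (\<delta>\<^sup>2/2 * (\<gamma>\<^sup>2/2))))"
    using assms \<gamma>(1) by (subst nn_integral_gig_kernel_minus_half) auto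
  also have "c * (sqrt (pi / (\<delta>\<^sup>2/2)) * exp (- 2 * sqrt (\<delta>\<^sup>2/2 * (\<gamma>\<^sup>2/2)))) = 1"
  proof -
    have "sqrt (\<delta>\<^sup>2/2 * (\<gamma>\<^sup>2/2)) = \<delta> * \<gamma> / 2" "sqrt (pi / (\<delta>\<^sup>2/2)) = sqrt (2*pi) / \<delta>"
      using assms \<gamma> by (simp_all add: real_sqrt_mult real_sqrt_divide field_simps)
    then show ?thesis
      unfolding c_def using assms by (simp add: exp_minus field_simps)
  qed
  then have "ennreal c * ennreal (sqrt (pi / (\<delta>\<^sup>2/2)) * exp (- 2 * sqrt (\<delta>\<^sup>2/2 * (\<gamma>\<^sup>2/2)))) = 1"
    using c by (simp flip: ennreal_mult)
  finally show ?thesis .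
qed

lemma sqrt_square_add_bounds:
  fixes \<alpha> t :: real
  assumes "\<alpha> > 0"
  shows "sqrt (t\<^sup>2 + \<alpha>\<^sup>2) > 0" "\<bar>t\<bar> \<le> sqrt (t\<^sup>2 + \<alpha>\<^sup>2)" "\<alpha> \<le> sqrt (t\<^sup>2 + \<alpha>\<^sup>2)"
  using assms by (auto simp: add_nonneg_pos intro: real_le_rsqrt)

lemma integrable_sin_gig_kernel_product:
  fixes \<alpha> \<delta> u :: real
  assumes \<alpha>: "\<alpha> > 0" and u: "u > 0"
  shows "integrable (lborel \<Otimes>\<^sub>M lborel)
    (\<lambda>(t, v). t * sin (\<delta> * t) * (exp (v/2) * gig_kernel (u\<^sup>2/2) ((t\<^sup>2 + \<alpha>\<^sup>2)/2) v))"
    (is "integrable _ ?F")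
proof (rule integrableI_bounded)
  define S where "S t = sqrt (t\<^sup>2 + \<alpha>\<^sup>2)" for t
  have S: "S t > 0" "\<bar>t\<bar> \<le> S t" "(S t)\<^sup>2 = t\<^sup>2 + \<alpha>\<^sup>2" for t
    using sqrt_square_add_bounds[OF \<alpha>, of t] unfolding S_def by auto
  have bound: "\<bar>t * sin (\<delta> * t)\<bar> * (sqrt (2*pi) * exp (- u * S t) / S t) \<le>
      sqrt (2*pi) * exp (- u * \<bar>t\<bar>)" for t
  proof -
    have "\<bar>t * sin (\<delta> * t)\<bar> \<le> \<bar>t\<bar>"
      by (simp add: abs_mult mult_left_le abs_sin_le_one)
    also have "\<dots> \<le> S t"
      by (rule S(2))
    finally have "\<bar>t * sin (\<delta> * t)\<bar> / S t \<le> 1"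
      using S(1)[of t] by simp
    moreover have "exp (- u * S t) \<le> exp (- u * \<bar>t\<bar>)"
      using S(2)[of t] u by simp
    ultimately have "\<bar>t * sin (\<delta> * t)\<bar> / S t * (sqrt (2*pi) * exp (- u * S t)) \<le>
        1 * (sqrt (2*pi) * exp (- u * \<bar>t\<bar>))"
      by (intro mult_mono) auto
    then show ?thesis by simp
  qed
  have "(\<integral>\<^sup>+p. ennreal (norm (?F p)) \<partial>(lborel \<Otimes>\<^sub>M lborel)) = (\<integral>\<^sup>+t. \<integral>\<^sup>+v.
      ennreal \<bar>t * sin (\<delta> * t)\<bar> * ennreal (exp (v/2) * gig_kernel (u\<^sup>2/2) ((S t)\<^sup>2/2) v) \<partial>lborel \<partial>lborel)"
    by (subst lborel.nn_integral_fst[symmetric]) (auto simp: S(3) abs_mult ennreal_mult)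
  also have "\<dots> = (\<integral>\<^sup>+t. ennreal \<bar>t * sin (\<delta> * t)\<bar> *
      ennreal (sqrt (2*pi) * exp (- u * S t) / S t) \<partial>lborel)"
    using u S(1) by (simp add: nn_integral_cmult nn_integral_gig_kernel_half_squares)
  also have "\<dots> \<le> (\<integral>\<^sup>+t. ennreal (sqrt (2*pi) * exp (- u * \<bar>t\<bar>)) \<partial>lborel)"
  proof (rule nn_integral_mono)
    fix t
    show "ennreal \<bar>t * sin (\<delta> * t)\<bar> * ennreal (sqrt (2*pi) * exp (- u * S t) / S t) \<le>
        ennreal (sqrt (2*pi) * exp (- u * \<bar>t\<bar>))"
      using bound[of t] S(1)[of t] by (subst ennreal_mult[symmetric]) (auto intro!: ennreal_leI)
  qed
  also have "\<dots> = ennreal (sqrt (2*pi)) * ennreal (2 / u)"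
    using nn_integral_exp_abs[OF u] by (simp add: ennreal_mult nn_integral_cmult)
  also have "\<dots> < \<infinity>"
    by (simp add: ennreal_mult_less_top)
  finally show "(\<integral>\<^sup>+p. ennreal (norm (?F p)) \<partial>(lborel \<Otimes>\<^sub>M lborel)) < \<infinity>" .
qed measurable

lemma integral_sin_gig_kernel:
  fixes \<alpha> \<delta> u v :: real
  shows "(LINT t|lborel. t * sin (\<delta> * t) * (exp (v/2) * gig_kernel (u\<^sup>2/2) ((t\<^sup>2 + \<alpha>\<^sup>2)/2) v)) =
    \<delta> * sqrt (2*pi) * (exp (- v) * gig_kernel ((\<delta>\<^sup>2 + u\<^sup>2)/2) (\<alpha>\<^sup>2/2) v)"
proof -
  define K where "K = exp (v/2) * exp (- (u\<^sup>2/2 * exp (- v) + \<alpha>\<^sup>2/2 * exp v))"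
  have pointwise: "t * sin (\<delta> * t) * (exp (v/2) * gig_kernel (u\<^sup>2/2) ((t\<^sup>2 + \<alpha>\<^sup>2)/2) v) =
      K * (t * sin (\<delta> * t) * exp (- exp v * t\<^sup>2 / 2))" for t
    unfolding K_def gig_kernel_def by (simp add: exp_add[symmetric] field_simps)
  then have "(LINT t|lborel. t * sin (\<delta> * t) * (exp (v/2) * gig_kernel (u\<^sup>2/2) ((t\<^sup>2 + \<alpha>\<^sup>2)/2) v)) =
      K * (LINT t|lborel. t * sin (\<delta> * t) * exp (- exp v * t\<^sup>2 / 2))"
    by (simp only: pointwise integral_mult_right_zero)
  also have "\<dots> = K * (\<delta> * sqrt (2*pi) * exp (- \<delta>\<^sup>2 / (2 * exp v)) / (exp v * sqrt (exp v)))"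
    using integral_sin_gaussian[of "exp v" \<delta>] by simp
  also have "\<dots> = \<delta> * sqrt (2*pi) * (exp (- v) * gig_kernel ((\<delta>\<^sup>2 + u\<^sup>2)/2) (\<alpha>\<^sup>2/2) v)"
  proof -
    have "sqrt (exp v) = exp (v/2)"
      by (rule real_sqrt_unique) (simp_all add: power2_eq_square exp_add[symmetric])
    moreover have "exp (v/2) / (exp v * exp (v/2)) = exp (- v)"
      by (simp add: exp_minus field_simps)
    moreover have "exp (- (u\<^sup>2/2 * exp (- v) + \<alpha>\<^sup>2/2 * exp v)) * exp (- \<delta>\<^sup>2 / (2 * exp v)) =
        gig_kernel ((\<delta>\<^sup>2 + u\<^sup>2)/2) (\<alpha>\<^sup>2/2) v"
      unfolding gig_kernel_def by (simp add: exp_add[symmetric] exp_minus field_simps)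
    ultimately show ?thesis
      unfolding K_def by (simp add: field_simps)
  qed
  finally show ?thesis .
qed

lemma integral_sin_exp_sqrt_besselK1:
  fixes \<alpha> \<delta> u :: real
  assumes \<alpha>: "\<alpha> > 0" and \<delta>: "\<delta> > 0" and u: "u > 0"
  shows "(LINT t|lborel. t * sin (\<delta> * t) * exp (- u * sqrt (t\<^sup>2 + \<alpha>\<^sup>2)) / sqrt (t\<^sup>2 + \<alpha>\<^sup>2)) =
    2 * \<alpha> * \<delta> * besselK1 (\<alpha> * sqrt (\<delta>\<^sup>2 + u\<^sup>2)) / sqrt (\<delta>\<^sup>2 + u\<^sup>2)"
proof -
  define S where "S t = sqrt (t\<^sup>2 + \<alpha>\<^sup>2)" for t
  define r where "r = sqrt (\<delta>\<^sup>2 + u\<^sup>2)"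
  have S: "S t > 0" "(S t)\<^sup>2 = t\<^sup>2 + \<alpha>\<^sup>2" for t
    unfolding S_def using \<alpha> by (auto simp: add_nonneg_pos)
  have r: "r > 0" "r\<^sup>2 = \<delta>\<^sup>2 + u\<^sup>2"
    unfolding r_def using \<delta> by (auto simp: add_pos_nonneg)
  define \<Phi> where "\<Phi> t v = t * sin (\<delta> * t) * (exp (v/2) * gig_kernel (u\<^sup>2/2) ((t\<^sup>2 + \<alpha>\<^sup>2)/2) v)" for t v
  have inner_v: "(LINT v|lborel. \<Phi> t v) = sqrt (2*pi) * (t * sin (\<delta> * t) * exp (- u * S t) / S t)" for t
    using integral_gig_kernel_half_squares[OF u S(1), of t] unfolding \<Phi>_def S(2) by simp
  have inner_t: "(LINT t|lborel. \<Phi> t v) =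
      \<delta> * sqrt (2*pi) * (exp (- v) * gig_kernel (r\<^sup>2/2) (\<alpha>\<^sup>2/2) v)" for v
    unfolding \<Phi>_def r(2) by (rule integral_sin_gig_kernel)
  have "sqrt (2*pi) * (LINT t|lborel. t * sin (\<delta> * t) * exp (- u * S t) / S t) =
      (LINT t|lborel. LINT v|lborel. \<Phi> t v)"
    unfolding inner_v by (rule integral_mult_right_zero[symmetric])
  also have "\<dots> = (LINT v|lborel. LINT t|lborel. \<Phi> t v)"
    using lborel_pair.Fubini_integral[OF integrable_sin_gig_kernel_product[OF \<alpha> u, of \<delta>]]
    unfolding \<Phi>_def by simp
  also have "\<dots> = \<delta> * sqrt (2*pi) * (2 * \<alpha> / r * besselK1 (\<alpha> * r))"
    unfolding inner_t using integral_gig_kernel_besselK1[OF \<alpha> r(1)] by simp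
  finally have "sqrt (2*pi) * (LINT t|lborel. t * sin (\<delta> * t) * exp (- u * S t) / S t) =
      sqrt (2*pi) * (2 * \<alpha> * \<delta> * besselK1 (\<alpha> * r) / r)"
    by (simp add: field_simps)
  then show ?thesis
    unfolding S_def r_def by (subst (asm) mult_cancel_left) simp
qed

lemma integrable_nig_tail_product:
  fixes \<alpha> \<beta> \<delta> y :: real
  assumes \<alpha>: "\<alpha> > 0" and \<beta>: "\<bar>\<beta>\<bar> < \<alpha>" and y: "y > 0"
  shows "integrable (lborel \<Otimes>\<^sub>M lborel) (\<lambda>(u, t). indicator {y<..} u *
    (exp (\<beta> * u) * (t * sin (\<delta> * t) * exp (- u * sqrt (t\<^sup>2 + \<alpha>\<^sup>2)) / sqrt (t\<^sup>2 + \<alpha>\<^sup>2))))"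
proof (rule integrable_lborel_pair_product_bound)
  define S where "S t = sqrt (t\<^sup>2 + \<alpha>\<^sup>2)" for t
  define \<kappa> where "\<kappa> = \<alpha> - \<bar>\<beta>\<bar>"
  have \<kappa>: "\<kappa> > 0" unfolding \<kappa>_def using \<beta> by simp
  have S: "S t > 0" "\<bar>t\<bar> \<le> S t" "S t - \<beta> \<ge> \<kappa>" for t
    using sqrt_square_add_bounds[OF \<alpha>, of t] abs_ge_self[of \<beta>]
    unfolding S_def \<kappa>_def by linarith+
  show "integrable lborel (\<lambda>u. exp (\<kappa> * y + y * \<bar>\<beta>\<bar>) * (indicator {y<..} u * exp (- \<kappa> * u)))"
    using set_integrable_exp_Ioi[OF \<kappa>, of y] unfolding set_integrable_def by simp
  show "integrable lborel (\<lambda>t. exp (- y * \<bar>t\<bar>))"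
    by (rule integrable_exp_abs[OF y])
  show "\<bar>indicator {y<..} u * (exp (\<beta> * u) * (t * sin (\<delta> * t) * exp (- u * sqrt (t\<^sup>2 + \<alpha>\<^sup>2)) /
      sqrt (t\<^sup>2 + \<alpha>\<^sup>2)))\<bar> \<le>
      exp (\<kappa> * y + y * \<bar>\<beta>\<bar>) * (indicator {y<..} u * exp (- \<kappa> * u)) * exp (- y * \<bar>t\<bar>)" for u t
  proof (cases "u > y")
    case True
    have "\<bar>t * sin (\<delta> * t)\<bar> \<le> \<bar>t\<bar>"
      by (simp add: abs_mult mult_left_le abs_sin_le_one)
    also have "\<dots> \<le> S t" by (rule S(2))
    finally have "\<bar>t * sin (\<delta> * t)\<bar> / S t \<le> 1"
      using S(1)[of t] by simp
    then have "\<bar>t * sin (\<delta> * t)\<bar> / S t * exp (- u * (S t - \<beta>)) \<le> 1 * exp (- u * (S t - \<beta>))"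
      by (intro mult_right_mono) auto
    also have "\<dots> \<le> exp (\<kappa> * y + y * \<bar>\<beta>\<bar> - \<kappa> * u - y * \<bar>t\<bar>)"
    proof -
      have "(u - y) * \<kappa> \<le> (u - y) * (S t - \<beta>)" "y * \<bar>t\<bar> \<le> y * S t" "y * \<beta> \<le> y * \<bar>\<beta>\<bar>"
        using True y S(2,3)[of t] by (auto intro: mult_left_mono)
      then show ?thesis by (simp add: algebra_simps)
    qed
    finally show ?thesis
      using True S(1)[of t] unfolding S_def
      by (simp add: abs_mult exp_add[symmetric] exp_diff add.commute field_simps)
  qed simp
qed auto

lemma
  fixes \<alpha> \<beta> \<delta> y :: real
  assumes \<alpha>: "\<alpha> > 0" and \<beta>: "\<bar>\<beta>\<bar> < \<alpha>" and \<delta>: "\<delta> > 0" and y: "y > 0"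
  shows integrable_nig_tail_integrand: "integrable lborel (\<lambda>t.
      t * exp (- y * (sqrt (t\<^sup>2 + \<alpha>\<^sup>2) - \<beta>)) / (sqrt (t\<^sup>2 + \<alpha>\<^sup>2) * (sqrt (t\<^sup>2 + \<alpha>\<^sup>2) - \<beta>)) * sin (\<delta> * t))"
    and set_integral_nig_density_Ioi: "(LINT u:{y<..}|lborel. nig_density \<alpha> \<beta> 0 \<delta> u) =
      exp (\<delta> * sqrt (\<alpha>\<^sup>2 - \<beta>\<^sup>2)) / (2*pi) * (LINT t|lborel.
      t * exp (- y * (sqrt (t\<^sup>2 + \<alpha>\<^sup>2) - \<beta>)) / (sqrt (t\<^sup>2 + \<alpha>\<^sup>2) * (sqrt (t\<^sup>2 + \<alpha>\<^sup>2) - \<beta>)) * sin (\<delta> * t))"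
proof -
  define S where "S t = sqrt (t\<^sup>2 + \<alpha>\<^sup>2)" for t
  have S: "S t > 0" "S t - \<beta> > 0" for t
    using sqrt_square_add_bounds[OF \<alpha>, of t] \<beta> abs_ge_self[of \<beta>]
    unfolding S_def by linarith+
  define \<Psi> where "\<Psi> u t = indicator {y<..} u * (exp (\<beta> * u) * (t * sin (\<delta> * t) * exp (- u * S t) / S t))"
    for u t
  have int_\<Psi>: "integrable (lborel \<Otimes>\<^sub>M lborel) (case_prod \<Psi>)"
    using integrable_nig_tail_product[OF \<alpha> \<beta> y, of \<delta>] unfolding \<Psi>_def S_def .
  have inner_t: "(LINT t|lborel. \<Psi> u t) = 2 * pi * exp (- \<delta> * sqrt (\<alpha>\<^sup>2 - \<beta>\<^sup>2)) *
      (indicator {y<..} u * nig_density \<alpha> \<beta> 0 \<delta> u)" for u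
  proof (cases "u > y")
    case True
    then have "(LINT t|lborel. \<Psi> u t) =
        exp (\<beta> * u) * (LINT t|lborel. t * sin (\<delta> * t) * exp (- u * S t) / S t)"
      unfolding \<Psi>_def by (subst integral_mult_right_zero[symmetric]) simp
    also have "\<dots> = exp (\<beta> * u) * (2 * \<alpha> * \<delta> * besselK1 (\<alpha> * sqrt (\<delta>\<^sup>2 + u\<^sup>2)) / sqrt (\<delta>\<^sup>2 + u\<^sup>2))"
      using integral_sin_exp_sqrt_besselK1[OF \<alpha> \<delta>, of u] True y unfolding S_def by simp
    also have "\<dots> = 2 * pi * exp (- \<delta> * sqrt (\<alpha>\<^sup>2 - \<beta>\<^sup>2)) * (indicator {y<..} u * nig_density \<alpha> \<beta> 0 \<delta> u)"
      unfolding nig_density_eq using True by (simp add: exp_add exp_minus field_simps)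
    finally show ?thesis .
  qed (simp add: \<Psi>_def)
  have inner_u: "(LINT u|lborel. \<Psi> u t) =
      t * exp (- y * (S t - \<beta>)) / (S t * (S t - \<beta>)) * sin (\<delta> * t)" for t
  proof -
    have "\<Psi> u t = t * sin (\<delta> * t) / S t * (indicator {y<..} u * exp (- (S t - \<beta>) * u))" for u
      unfolding \<Psi>_def by (simp add: exp_add[symmetric] algebra_simps)
    then have "(LINT u|lborel. \<Psi> u t) =
        t * sin (\<delta> * t) / S t * (LINT u:{y<..}|lborel. exp (- (S t - \<beta>) * u))"
      by (simp add: set_lebesgue_integral_def)
    also have "\<dots> = t * exp (- y * (S t - \<beta>)) / (S t * (S t - \<beta>)) * sin (\<delta> * t)"
      using set_integral_exp_Ioi[OF S(2), of y] by (simp add: field_simps)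
    finally show ?thesis .
  qed
  show "integrable lborel (\<lambda>t.
      t * exp (- y * (sqrt (t\<^sup>2 + \<alpha>\<^sup>2) - \<beta>)) / (sqrt (t\<^sup>2 + \<alpha>\<^sup>2) * (sqrt (t\<^sup>2 + \<alpha>\<^sup>2) - \<beta>)) * sin (\<delta> * t))"
    using lborel_pair.integrable_snd[OF int_\<Psi>] unfolding inner_u S_def .
  have "2 * pi * exp (- \<delta> * sqrt (\<alpha>\<^sup>2 - \<beta>\<^sup>2)) * (LINT u:{y<..}|lborel. nig_density \<alpha> \<beta> 0 \<delta> u) =
      (LINT u|lborel. LINT t|lborel. \<Psi> u t)"
    unfolding inner_t set_lebesgue_integral_def by simp
  also have "\<dots> = (LINT t|lborel. LINT u|lborel. \<Psi> u t)"
    by (rule lborel_pair.Fubini_integral[OF int_\<Psi>, symmetric])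
  finally show "(LINT u:{y<..}|lborel. nig_density \<alpha> \<beta> 0 \<delta> u) =
      exp (\<delta> * sqrt (\<alpha>\<^sup>2 - \<beta>\<^sup>2)) / (2*pi) * (LINT t|lborel.
      t * exp (- y * (sqrt (t\<^sup>2 + \<alpha>\<^sup>2) - \<beta>)) / (sqrt (t\<^sup>2 + \<alpha>\<^sup>2) * (sqrt (t\<^sup>2 + \<alpha>\<^sup>2) - \<beta>)) * sin (\<delta> * t))"
    unfolding inner_u S_def by (simp add: exp_minus field_simps)
qed

lemma nig_cdf_eq_1_minus_tail:
  fixes \<alpha> \<beta> \<mu> \<delta> x :: real
  assumes "\<alpha> > 0" "\<bar>\<beta>\<bar> < \<alpha>" "\<delta> > 0"
  shows "nig_cdf \<alpha> \<beta> \<mu> \<delta> x = 1 - (LINT u:{x - \<mu><..}|lborel. nig_density \<alpha> \<beta> 0 \<delta> u)"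
proof -
  define f where "f = nig_density \<alpha> \<beta> 0 \<delta>"
  have "integrable lborel f \<and> (LINT u|lborel. f u) = 1"
    using nn_integral_eq_integrable[of f lborel 1] nn_integral_nig_density[OF assms]
      nig_density_nonneg assms
    unfolding f_def by auto
  then have int: "integrable lborel f" "integrable lborel (\<lambda>u. indicator {x - \<mu><..} u * f u)"
    and total: "(LINT u|lborel. f u) = 1"
    using integrable_mult_indicator[of "{x - \<mu><..}" lborel f] by auto
  have "nig_cdf \<alpha> \<beta> \<mu> \<delta> x = (LINT t|lborel. indicator {..x} t * f (t - \<mu>))"
    unfolding nig_cdf_def set_lebesgue_integral_def f_def nig_density_shift[of _ _ \<mu>] by simp
  also have "\<dots> = \<bar>1\<bar> *\<^sub>R (LINT u|lborel. indicator {..x} (\<mu> + 1 * u) * f (\<mu> + 1 * u - \<mu>))"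
    by (rule lborel_integral_real_affine) simp
  also have "\<dots> = (LINT u|lborel. indicator {..x - \<mu>} u * f u)"
    by (auto intro!: Bochner_Integration.integral_cong split: split_indicator)
  also have "\<dots> = (LINT u|lborel. f u - indicator {x - \<mu><..} u * f u)"
    by (intro Bochner_Integration.integral_cong) (auto split: split_indicator)
  also have "\<dots> = 1 - (LINT u:{x - \<mu><..}|lborel. f u)"
    using int total by (simp add: set_lebesgue_integral_def)
  finally show ?thesis
    unfolding f_def .
qed

theorem proposition2:
  fixes \<alpha> \<beta> \<mu> \<delta> x :: real
  assumes "\<alpha> > 0" and "\<bar>\<beta>\<bar> < \<alpha>" and "\<delta> > 0" and "x - \<mu> > 0"
  shows "nig_cdf \<alpha> \<beta> \<mu> \<delta> x =
    1 - exp (\<delta> * sqrt (\<alpha>\<^sup>2 - \<beta>\<^sup>2)) / pi *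
      (LINT t:{0..}|lborel.
         t * exp (- (x - \<mu>) * (sqrt (t\<^sup>2 + \<alpha>\<^sup>2) - \<beta>)) /
           (sqrt (t\<^sup>2 + \<alpha>\<^sup>2) * (sqrt (t\<^sup>2 + \<alpha>\<^sup>2) - \<beta>)) * sin (\<delta> * t))"
proof -
  let ?h = "\<lambda>t. t * exp (- (x - \<mu>) * (sqrt (t\<^sup>2 + \<alpha>\<^sup>2) - \<beta>)) /
    (sqrt (t\<^sup>2 + \<alpha>\<^sup>2) * (sqrt (t\<^sup>2 + \<alpha>\<^sup>2) - \<beta>)) * sin (\<delta> * t)"
  have "nig_cdf \<alpha> \<beta> \<mu> \<delta> x = 1 - (LINT u:{x - \<mu><..}|lborel. nig_density \<alpha> \<beta> 0 \<delta> u)"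
    using assms(1-3) by (rule nig_cdf_eq_1_minus_tail)
  also have "(LINT u:{x - \<mu><..}|lborel. nig_density \<alpha> \<beta> 0 \<delta> u) =
      exp (\<delta> * sqrt (\<alpha>\<^sup>2 - \<beta>\<^sup>2)) / (2*pi) * (LINT t|lborel. ?h t)"
    using assms by (rule set_integral_nig_density_Ioi)
  also have "(LINT t|lborel. ?h t) = 2 * (LINT t:{0..}|lborel. ?h t)"
    using integrable_nig_tail_integrand[OF assms] by (rule integral_even) simp
  finally show ?thesis
    by simp
qed

end
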